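(* Let $\mathfrak{g}=\mathfrak{gl}(p,q)$, $k\ge1$, and let all $X_i\in\mathfrak g$ be homogeneous. Then: (a) $P_{2k+1}(X_1,\ldots,X_{2k+1})=(2k+1)\,B(\mathcal P_{2k}(X_1,\ldots,X_{2k})\mid X_{2k+1})$; $\Lambda_{2k}(X_1,\ldots,X_{2k})=0$; and $\Lambda_{2k+1}(X_1,\ldots,X_{2k+1})=(2k+1)\,B(\mathcal A_{2k}(X_1,\ldots,X_{2k})\mid X_{2k+1})$. (b) $\displaystyle\sum_{\sigma\in\mathfrak S_{2k}}\epsilon(\sigma)\epsilon(\sigma,\mathcal X)[X_{\sigma(1)},X_{\sigma(2)}]\cdots[X_{\sigma(2k-1)},X_{\sigma(2k)}]=2^k\mathcal A_{2k}(X_1,\ldots,X_{2k})$. (c) For each $j$ with $0\le j\le k$, $\displaystyle\sum_{\sigma\in\mathfrak S_{2k+1}}\epsilon(\sigma)\epsilon(\sigma,\mathcal X)[X_{\sigma(1)},X_{\sigma(2)}]\cdots[X_{\sigma(2j-1)},X_{\sigma(2j)}]\,X_{\sigma(2j+1)}\,[X_{\sigma(2j+2)},X_{\sigma(2j+3)}]\cdots[X_{\sigma(2k)},X_{\sigma(2k+1)}]=2^k\mathcal A_{2k+1}(X_1,\ldots,X_{2k+1})$.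
   Context: $\mathfrak{gl}(p,q)=\mathrm{End}(V)$ for a $\mathbb Z_2$-graded complex vector space $V=V_{\bar0}\oplus V_{\bar1}$ with $\dim V_{\bar0}=p$, $\dim V_{\bar1}=q$; homogeneous elements have degrees denoted by lower-case letters, products are compositions, and $[X,Y]=XY-(-1)^{xy}YX$. The super trace is $\mathrm{str}\begin{pmatrix}a&b\\c&d\end{pmatrix}=\mathrm{tr}(a)-\mathrm{tr}(d)$ and $B(Z\mid T)=\mathrm{str}(ZT)$. For $\mathcal X=(X_1,\dots,X_m)$ and $\sigma\in\mathfrak S_m$, $\epsilon(\sigma)$ is the sign of $\sigma$ and $\epsilon(\sigma,\mathcal X)=(-1)^K$ with $K$ the number of pairs $i<j$ such that $\sigma(i)>\sigma(j)$ and $X_{\sigma(i)},X_{\sigma(j)}$ are both odd. Define $\mathcal P_m(X_1,\dots,X_m)=\sum_{\sigma\in\mathfrak S_m}\epsilon(\sigma,\mathcal X)X_{\sigma(1)}\cdots X_{\sigma(m)}$, $\mathcal A_m(X_1,\dots,X_m)=\sum_{\sigma}\epsilon(\sigma)\epsilon(\sigma,\mathcal X)X_{\sigma(1)}\cdots X_{\sigma(m)}$, $P_m=\mathrm{str}\circ\mathcal P_m$, $\Lambda_m=\mathrm{str}\circ\mathcal A_m$. In (c), for $j=0$ there are no brackets before $X_{\sigma(1)}$ and for $j=k$ none after $X_{\sigma(2k+1)}$. *)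

theory Defs
  imports Complex_Main "HOL-Combinatorics.Permutations"
begin

text \<open>Endomorphisms of V = V0 (+) V1, dim V0 = p, dim V1 = q, are represented as
(p+q) x (p+q) complex matrices (functions nat => nat => complex vanishing outside the
index range {0..<p+q}). Basis indices 0..<p span the even part, p..<p+q the odd part.\<close>

type_synonym cmat = "nat \<Rightarrow> nat \<Rightarrow> complex"

definition mmul :: "nat \<Rightarrow> cmat \<Rightarrow> cmat \<Rightarrow> cmat" where
  "mmul n A B = (\<lambda>i j. \<Sum>l<n. A i l * B l j)"

definition mone :: "nat \<Rightarrow> cmat" where
  "mone n = (\<lambda>i j. if i = j \<and> i < n then 1 else 0)"

definition mlprod :: "nat \<Rightarrow> cmat list \<Rightarrow> cmat" where
  "mlprod n Ms = foldr (mmul n) Ms (mone n)"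

definition msub :: "cmat \<Rightarrow> cmat \<Rightarrow> cmat" where
  "msub A B = (\<lambda>i j. A i j - B i j)"

definition msmul :: "complex \<Rightarrow> cmat \<Rightarrow> cmat" where
  "msmul c A = (\<lambda>i j. c * A i j)"

definition msum :: "'a set \<Rightarrow> ('a \<Rightarrow> cmat) \<Rightarrow> cmat" where
  "msum S f = (\<lambda>i j. \<Sum>s\<in>S. f s i j)"

definition in_gl :: "nat \<Rightarrow> nat \<Rightarrow> cmat \<Rightarrow> bool" where
  "in_gl p q A \<longleftrightarrow> (\<forall>i j. (p + q \<le> i \<or> p + q \<le> j) \<longrightarrow> A i j = 0)"

definition idx_odd :: "nat \<Rightarrow> nat \<Rightarrow> bool" where
  "idx_odd p i \<longleftrightarrow> p \<le> i"

text \<open>A is homogeneous of degree d (d = True means odd).\<close>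
definition homog :: "nat \<Rightarrow> nat \<Rightarrow> bool \<Rightarrow> cmat \<Rightarrow> bool" where
  "homog p q d A \<longleftrightarrow> in_gl p q A \<and>
     (\<forall>i j. A i j \<noteq> 0 \<longrightarrow> (idx_odd p i \<noteq> idx_odd p j) = d)"

definition str :: "nat \<Rightarrow> nat \<Rightarrow> cmat \<Rightarrow> complex" where
  "str p q A = (\<Sum>i<p. A i i) - (\<Sum>i\<in>{p..<p+q}. A i i)"

definition Bform :: "nat \<Rightarrow> nat \<Rightarrow> cmat \<Rightarrow> cmat \<Rightarrow> complex" where
  "Bform p q Z T = str p q (mmul (p + q) Z T)"

definition sbr :: "nat \<Rightarrow> bool \<Rightarrow> bool \<Rightarrow> cmat \<Rightarrow> cmat \<Rightarrow> cmat" where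
  "sbr n dx dy X Y = msub (mmul n X Y) (msmul (if dx \<and> dy then -1 else 1) (mmul n Y X))"

text \<open>epsilon(sigma, X) for sigma a permutation of {0..<m}; d i is the degree of X_i.\<close>
definition eps_par :: "(nat \<Rightarrow> bool) \<Rightarrow> nat \<Rightarrow> (nat \<Rightarrow> nat) \<Rightarrow> complex" where
  "eps_par d m \<sigma> = (-1) ^ card {(i, j). i < j \<and> j < m \<and> \<sigma> j < \<sigma> i \<and> d (\<sigma> i) \<and> d (\<sigma> j)}"

definition calP :: "nat \<Rightarrow> nat \<Rightarrow> (nat \<Rightarrow> bool) \<Rightarrow> (nat \<Rightarrow> cmat) \<Rightarrow> nat \<Rightarrow> cmat" where
  "calP p q d X m = msum {\<sigma>. \<sigma> permutes {..<m}}
     (\<lambda>\<sigma>. msmul (eps_par d m \<sigma>) (mlprod (p + q) (map (\<lambda>i. X (\<sigma> i)) [0..<m])))"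

definition calA :: "nat \<Rightarrow> nat \<Rightarrow> (nat \<Rightarrow> bool) \<Rightarrow> (nat \<Rightarrow> cmat) \<Rightarrow> nat \<Rightarrow> cmat" where
  "calA p q d X m = msum {\<sigma>. \<sigma> permutes {..<m}}
     (\<lambda>\<sigma>. msmul (of_int (sign \<sigma>) * eps_par d m \<sigma>) (mlprod (p + q) (map (\<lambda>i. X (\<sigma> i)) [0..<m])))"

definition Pm :: "nat \<Rightarrow> nat \<Rightarrow> (nat \<Rightarrow> bool) \<Rightarrow> (nat \<Rightarrow> cmat) \<Rightarrow> nat \<Rightarrow> complex" where
  "Pm p q d X m = str p q (calP p q d X m)"

definition Lam :: "nat \<Rightarrow> nat \<Rightarrow> (nat \<Rightarrow> bool) \<Rightarrow> (nat \<Rightarrow> cmat) \<Rightarrow> nat \<Rightarrow> complex" where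
  "Lam p q d X m = str p q (calA p q d X m)"

definition brk :: "nat \<Rightarrow> (nat \<Rightarrow> bool) \<Rightarrow> (nat \<Rightarrow> cmat) \<Rightarrow> (nat \<Rightarrow> nat) \<Rightarrow> nat \<Rightarrow> cmat" where
  "brk n d X \<sigma> a = sbr n (d (\<sigma> a)) (d (\<sigma> (Suc a))) (X (\<sigma> a)) (X (\<sigma> (Suc a)))"

definition lhsB :: "nat \<Rightarrow> nat \<Rightarrow> (nat \<Rightarrow> bool) \<Rightarrow> (nat \<Rightarrow> cmat) \<Rightarrow> nat \<Rightarrow> cmat" where
  "lhsB p q d X k = msum {\<sigma>. \<sigma> permutes {..<2*k}}
     (\<lambda>\<sigma>. msmul (of_int (sign \<sigma>) * eps_par d (2*k) \<sigma>)
        (mlprod (p + q) (map (\<lambda>i. brk (p + q) d X \<sigma> (2*i)) [0..<k])))"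

definition lhsC :: "nat \<Rightarrow> nat \<Rightarrow> (nat \<Rightarrow> bool) \<Rightarrow> (nat \<Rightarrow> cmat) \<Rightarrow> nat \<Rightarrow> nat \<Rightarrow> cmat" where
  "lhsC p q d X k j = msum {\<sigma>. \<sigma> permutes {..<2*k+1}}
     (\<lambda>\<sigma>. msmul (of_int (sign \<sigma>) * eps_par d (2*k+1) \<sigma>)
        (mlprod (p + q)
          (map (\<lambda>i. brk (p + q) d X \<sigma> (2*i)) [0..<j]
           @ [X (\<sigma> (2*j))]
           @ map (\<lambda>i. brk (p + q) d X \<sigma> (2*j + 1 + 2*i)) [0..<k-j])))"

end

theory Submission
  imports Defs
begin

text \<open>
  The supertrace is supersymmetric, str(AB) = (-1)^(ab) str(BA), and when c is the cyclic
  rotation i \<mapsto> i+1 (mod m+1) the sign \<epsilon>(\<sigma> \<circ> c, X) differs from \<epsilon>(\<sigma>, X) by exactly this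
  factor. Hence the summands of P_(m+1) are invariant under \<sigma> \<mapsto> \<sigma> \<circ> c, while those of
  \<Lambda>_(m+1) pick up sign(c) = (-1)^m. So \<Lambda>_(m+1) = 0 for m odd, and grouping the permutations
  of {0..m} according to the preimage of m gives m+1 groups with equal sums, each equal to the
  sum over the permutations fixing m, i.e. to B(P_m | X_m), resp. B(A_m | X_m) for m even.

  For (b) and (c), expanding one bracket [X_(\<sigma> a), X_(\<sigma> (a+1))] gives the word of \<sigma> minus
  (-1)^(xy) times the word of \<sigma> \<circ> (a a+1); as sign(\<sigma>) \<epsilon>(\<sigma>, X) changes by exactly -(-1)^(xy)
  under \<sigma> \<mapsto> \<sigma> \<circ> (a a+1), both halves yield the same alternating sum, so every bracket
  contributes a factor 2.
\<close>

lemma mmul_assoc: "mmul n (mmul n A B) C = mmul n A (mmul n B C)"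
  unfolding mmul_def
  by (auto simp: fun_eq_iff sum_distrib_left sum_distrib_right mult.assoc intro: sum.swap)

lemma mmul_mone_right: "in_gl p q A \<Longrightarrow> mmul (p + q) A (mone (p + q)) = A"
  unfolding mmul_def mone_def in_gl_def
  by (auto simp: fun_eq_iff if_distrib[where f="\<lambda>x. _ * x"] cong: if_cong)

lemma mmul_mone_left: "in_gl p q A \<Longrightarrow> mmul (p + q) (mone (p + q)) A = A"
  unfolding mmul_def mone_def in_gl_def
proof (intro ext)
  fix i j assume "\<forall>i j. p + q \<le> i \<or> p + q \<le> j \<longrightarrow> A i j = 0"
  then show "(\<Sum>l<p + q. (if i = l \<and> i < p + q then 1 else 0) * A l j) = A i j"
    by (cases "i < p + q") (simp_all add: if_distrib[where f="\<lambda>x. x * _"] cong: if_cong)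
qed

lemma mmul_msub_left: "mmul n (msub A B) C = msub (mmul n A C) (mmul n B C)"
  unfolding mmul_def msub_def by (simp add: fun_eq_iff left_diff_distrib sum_subtractf)

lemma mmul_msub_right: "mmul n A (msub B C) = msub (mmul n A B) (mmul n A C)"
  unfolding mmul_def msub_def by (simp add: fun_eq_iff right_diff_distrib sum_subtractf)

lemma mmul_msmul_left: "mmul n (msmul c A) B = msmul c (mmul n A B)"
  unfolding mmul_def msmul_def by (simp add: fun_eq_iff sum_distrib_left mult.assoc)

lemma mmul_msmul_right: "mmul n A (msmul c B) = msmul c (mmul n A B)"
  unfolding mmul_def msmul_def by (simp add: fun_eq_iff sum_distrib_left mult.left_commute)

lemma msmul_msmul: "msmul a (msmul b M) = msmul (a * b) M"
  by (simp add: msmul_def fun_eq_iff mult.assoc)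

lemma mmul_msum_left:
  "mmul n (msum S (\<lambda>s. msmul (c s) (M s))) B = msum S (\<lambda>s. msmul (c s) (mmul n (M s) B))"
  unfolding mmul_def msum_def msmul_def
  by (auto simp: fun_eq_iff sum_distrib_left sum_distrib_right mult.assoc intro: sum.swap)

lemma str_msum: "str p q (msum S (\<lambda>s. msmul (c s) (M s))) = (\<Sum>s\<in>S. c s * str p q (M s))"
  unfolding str_def msum_def msmul_def
  by (simp add: sum_distrib_left sum.swap[of _ S "{..<p}"] sum.swap[of _ S "{p..<p+q}"]
      right_diff_distrib sum_subtractf)

lemma mlprod_Cons: "mlprod n (A # Ms) = mmul n A (mlprod n Ms)"
  by (simp add: mlprod_def)

lemma mlprod_append_single:
  "in_gl p q A \<Longrightarrow> mlprod (p + q) (Ms @ [A]) = mmul (p + q) (mlprod (p + q) Ms) A"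
  by (induction Ms) (simp_all add: mlprod_def mmul_mone_right mmul_mone_left mmul_assoc)

lemma mlprod_sbr:
  "mlprod n (Ms @ sbr n a b A B # Ns) =
   msub (mlprod n (Ms @ A # B # Ns)) (msmul (if a \<and> b then -1 else 1) (mlprod n (Ms @ B # A # Ns)))"
proof -
  have "foldr (mmul n) Ms (msub C (msmul c D)) =
        msub (foldr (mmul n) Ms C) (msmul c (foldr (mmul n) Ms D))" for C D c
    by (induction Ms) (simp_all add: mmul_msub_right mmul_msmul_right)
  then show ?thesis
    unfolding mlprod_def sbr_def by (simp add: mmul_msub_left mmul_msmul_left mmul_assoc)
qed

lemma homog_in_gl: "homog p q a A \<Longrightarrow> in_gl p q A"
  by (simp add: homog_def)

lemma homog_mone: "homog p q False (mone (p + q))"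
  unfolding homog_def in_gl_def mone_def by auto

lemma homog_mmul:
  assumes "homog p q a A" "homog p q b B"
  shows "homog p q (a \<noteq> b) (mmul (p + q) A B)"
  unfolding homog_def
proof (intro conjI allI impI)
  show "in_gl p q (mmul (p + q) A B)"
    using assms unfolding homog_def in_gl_def mmul_def by auto
next
  fix i j assume "mmul (p + q) A B i j \<noteq> 0"
  then obtain l where "A i l * B l j \<noteq> 0"
    unfolding mmul_def by (meson sum.neutral)
  then have "A i l \<noteq> 0" "B l j \<noteq> 0" by auto
  with assms show "(idx_odd p i \<noteq> idx_odd p j) = (a \<noteq> b)"
    unfolding homog_def by blast
qed

lemma homog_mlprod:
  "(\<And>x. x \<in> set xs \<Longrightarrow> homog p q (D x) (Y x)) \<Longrightarrow>
   homog p q (odd (length (filter D xs))) (mlprod (p + q) (map Y xs))"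
proof (induction xs)
  case Nil
  then show ?case by (simp add: mlprod_def homog_mone)
next
  case (Cons x xs)
  then have "homog p q (D x \<noteq> odd (length (filter D xs))) (mmul (p + q) (Y x) (mlprod (p + q) (map Y xs)))"
    by (intro homog_mmul) auto
  then have "homog p q (D x \<noteq> odd (length (filter D xs))) (mlprod (p + q) (map Y (x # xs)))"
    by (simp add: mlprod_Cons)
  then show ?case by (cases "D x") auto
qed

lemma str_eq_signed_sum: "str p q A = (\<Sum>i<p + q. (if i < p then 1 else -1) * A i i)"
proof -
  have split: "{..<p + q} = {..<p} \<union> {p..<p + q}" by auto
  have "(\<Sum>i<p + q. (if i < p then 1 else -1) * A i i) =
      (\<Sum>i<p. (if i < p then 1 else -1) * A i i) + (\<Sum>i\<in>{p..<p + q}. (if i < p then 1 else -1) * A i i)"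
    by (subst split, rule sum.union_disjoint) auto
  then show ?thesis by (simp add: str_def sum_negf)
qed

lemma str_mmul_commute:
  assumes "homog p q a A" "homog p q b B"
  shows "str p q (mmul (p + q) A B) = (if a \<and> b then -1 else 1) * str p q (mmul (p + q) B A)"
proof -
  let ?s = "\<lambda>i::nat. (if i < p then 1 else -1::complex)"
  have swap: "?s i * (A i l * B l i) = (if a \<and> b then -1 else 1) * (?s l * (B l i * A i l))" for i l
  proof (cases "A i l = 0 \<or> B l i = 0")
    case False
    then have "(idx_odd p i \<noteq> idx_odd p l) = a" "(idx_odd p l \<noteq> idx_odd p i) = b"
      using assms unfolding homog_def by auto
    then show ?thesis unfolding idx_odd_def by auto
  qed auto
  have "str p q (mmul (p + q) A B) = (\<Sum>i<p + q. \<Sum>l<p + q. ?s i * (A i l * B l i))"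
    by (simp add: str_eq_signed_sum mmul_def sum_distrib_left)
  also have "\<dots> = (\<Sum>i<p + q. \<Sum>l<p + q. (if a \<and> b then -1 else 1) * (?s l * (B l i * A i l)))"
    by (simp only: swap)
  also have "\<dots> = (if a \<and> b then -1 else 1) * str p q (mmul (p + q) B A)"
    by (subst sum.swap) (simp add: str_eq_signed_sum mmul_def sum_distrib_left)
  finally show ?thesis .
qed

definition pair_sign :: "(nat \<Rightarrow> bool) \<Rightarrow> nat \<Rightarrow> nat \<Rightarrow> complex" where
  "pair_sign d u v = (if v < u \<and> d u \<and> d v then -1 else 1)"

definition index_pairs :: "nat \<Rightarrow> (nat \<times> nat) set" where
  "index_pairs m = {(i, j). i < j \<and> j < m}"

lemma finite_index_pairs: "finite (index_pairs m)"
  by (rule finite_subset[of _ "{..<m} \<times> {..<m}"]) (auto simp: index_pairs_def)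

lemma eps_par_eq_prod: "eps_par d m \<sigma> = (\<Prod>x\<in>index_pairs m. pair_sign d (\<sigma> (fst x)) (\<sigma> (snd x)))"
proof -
  have "{(i, j). i < j \<and> j < m \<and> \<sigma> j < \<sigma> i \<and> d (\<sigma> i) \<and> d (\<sigma> j)}
     = {x \<in> index_pairs m. \<sigma> (snd x) < \<sigma> (fst x) \<and> d (\<sigma> (fst x)) \<and> d (\<sigma> (snd x))}"
    by (auto simp: index_pairs_def)
  then have "eps_par d m \<sigma> =
      (\<Prod>x\<in>{x \<in> index_pairs m. \<sigma> (snd x) < \<sigma> (fst x) \<and> d (\<sigma> (fst x)) \<and> d (\<sigma> (snd x))}. -1)"
    unfolding eps_par_def by simp
  also have "\<dots> = (\<Prod>x\<in>index_pairs m. pair_sign d (\<sigma> (fst x)) (\<sigma> (snd x)))"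
    by (subst prod.inter_filter[OF finite_index_pairs]) (simp add: pair_sign_def)
  finally show ?thesis .
qed

lemma bij_betw_sort_pair:
  assumes "\<rho> permutes {..<m}"
  shows "bij_betw (\<lambda>x. (min (\<rho> (fst x)) (\<rho> (snd x)), max (\<rho> (fst x)) (\<rho> (snd x))))
           (index_pairs m) (index_pairs m)"
proof -
  have inv: "inv \<rho> permutes {..<m}" using permutes_inv[OF assms] .
  have ri: "\<rho> (inv \<rho> x) = x" "inv \<rho> (\<rho> x) = x" for x
    using permutes_inverses[OF assms] by auto
  have rin: "\<rho> x < m \<longleftrightarrow> x < m" "inv \<rho> x < m \<longleftrightarrow> x < m" for x
    using permutes_in_image[OF assms] permutes_in_image[OF inv] by auto
  have rinj: "\<rho> x = \<rho> y \<longleftrightarrow> x = y" "inv \<rho> x = inv \<rho> y \<longleftrightarrow> x = y" for x y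
    by (metis ri)+
  show ?thesis
    unfolding index_pairs_def
  proof (rule bij_betw_byWitness[where f'="\<lambda>x. (min (inv \<rho> (fst x)) (inv \<rho> (snd x)),
                                                 max (inv \<rho> (fst x)) (inv \<rho> (snd x)))"])
    show "(\<lambda>x. (min (\<rho> (fst x)) (\<rho> (snd x)), max (\<rho> (fst x)) (\<rho> (snd x)))) `
            {(i, j). i < j \<and> j < m} \<subseteq> {(i, j). i < j \<and> j < m}"
      using rinj rin by (auto simp: min_def max_def) (metis le_less less_irrefl)+
    show "(\<lambda>x. (min (inv \<rho> (fst x)) (inv \<rho> (snd x)), max (inv \<rho> (fst x)) (inv \<rho> (snd x)))) `
            {(i, j). i < j \<and> j < m} \<subseteq> {(i, j). i < j \<and> j < m}"
      using rinj rin by (auto simp: min_def max_def) (metis le_less less_irrefl)+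
  qed (auto simp: ri min_def max_def)
qed

lemma eps_par_compose:
  assumes \<sigma>: "\<sigma> permutes {..<m}" and \<rho>: "\<rho> permutes {..<m}"
  shows "eps_par d m (\<sigma> \<circ> \<rho>) = eps_par d m \<sigma> * eps_par (d \<circ> \<sigma>) m \<rho>"
proof -
  define sort where "sort = (\<lambda>x. (min (\<rho> (fst x)) (\<rho> (snd x)), max (\<rho> (fst x)) (\<rho> (snd x))))"
  have "pair_sign d (\<sigma> (\<rho> (fst x))) (\<sigma> (\<rho> (snd x))) =
        pair_sign d (\<sigma> (fst (sort x))) (\<sigma> (snd (sort x))) * pair_sign (d \<circ> \<sigma>) (\<rho> (fst x)) (\<rho> (snd x))"
    if "x \<in> index_pairs m" for x
  proof -
    have "\<rho> (fst x) \<noteq> \<rho> (snd x)" "\<sigma> (\<rho> (fst x)) \<noteq> \<sigma> (\<rho> (snd x))"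
      using that permutes_inj[OF \<sigma>] permutes_inj[OF \<rho>]
      by (auto simp: index_pairs_def inj_eq)
    then show ?thesis
      unfolding sort_def pair_sign_def by (auto simp: min_def max_def)
  qed
  then have "eps_par d m (\<sigma> \<circ> \<rho>) =
      (\<Prod>x\<in>index_pairs m. pair_sign d (\<sigma> (fst (sort x))) (\<sigma> (snd (sort x)))) * eps_par (d \<circ> \<sigma>) m \<rho>"
    by (simp add: eps_par_eq_prod prod.distrib cong: prod.cong)
  also have "(\<Prod>x\<in>index_pairs m. pair_sign d (\<sigma> (fst (sort x))) (\<sigma> (snd (sort x)))) = eps_par d m \<sigma>"
    using prod.reindex_bij_betw[OF bij_betw_sort_pair[OF \<rho>], of "\<lambda>x. pair_sign d (\<sigma> (fst x)) (\<sigma> (snd x))"]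
    by (simp add: eps_par_eq_prod sort_def)
  finally show ?thesis .
qed

lemma eps_par_transpose:
  assumes "Suc a < m"
  shows "eps_par d m (transpose a (Suc a)) = (if d a \<and> d (Suc a) then -1 else 1)"
proof -
  have "{(i, j). i < j \<and> j < m \<and> transpose a (Suc a) j < transpose a (Suc a) i \<and>
      d (transpose a (Suc a) i) \<and> d (transpose a (Suc a) j)} = (if d a \<and> d (Suc a) then {(a, Suc a)} else {})"
    using assms by (auto simp: transpose_def split: if_splits)
  then show ?thesis unfolding eps_par_def by simp
qed

lemma eps_par_Suc:
  assumes "\<tau> permutes {..<m}"
  shows "eps_par d (Suc m) \<tau> = eps_par d m \<tau>"
proof -
  have "\<tau> i < m" if "i < m" for i using permutes_in_image[OF assms] that by auto
  moreover have "\<tau> m = m" using permutes_not_in[OF assms] by simp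
  ultimately have "{(i, j). i < j \<and> j < Suc m \<and> \<tau> j < \<tau> i \<and> d (\<tau> i) \<and> d (\<tau> j)}
     = {(i, j). i < j \<and> j < m \<and> \<tau> j < \<tau> i \<and> d (\<tau> i) \<and> d (\<tau> j)}"
    by (auto simp: less_Suc_eq) (metis less_asym less_trans)+
  then show ?thesis unfolding eps_par_def by simp
qed

definition rot :: "nat \<Rightarrow> nat \<Rightarrow> nat" where
  "rot m i = (if i < m then (if Suc i = m then 0 else Suc i) else i)"

lemma rot_permutes: "rot m permutes {..<m}"
proof (rule bij_imp_permutes)
  show "bij_betw (rot m) {..<m} {..<m}"
    by (rule bij_betw_byWitness[where f'="\<lambda>i. if i = 0 then m - 1 else i - 1"]) (auto simp: rot_def)
qed (auto simp: rot_def)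

lemma rot_funpow_permutes: "(rot m ^^ e) permutes {..<m}"
proof (induction e)
  case (Suc e)
  show ?case unfolding funpow_Suc_right by (rule permutes_compose[OF rot_permutes Suc.IH])
qed (simp add: permutes_id[unfolded id_def])

lemma rot_funpow_last: "i < Suc m \<Longrightarrow> (rot (Suc m) ^^ Suc i) m = i"
  by (induction i) (auto simp: rot_def)

lemma sign_rot: "sign (rot (Suc m)) = (-1) ^ m"
proof (induction m)
  case 0
  have "rot 1 = id" by (auto simp: fun_eq_iff rot_def)
  then show ?case by simp
next
  case (Suc m)
  have "rot (Suc (Suc m)) = rot (Suc m) \<circ> transpose m (Suc m)"
    by (auto simp: fun_eq_iff rot_def transpose_def)
  then have "sign (rot (Suc (Suc m))) = sign (rot (Suc m)) * sign (transpose m (Suc m))"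
    by (simp add: sign_compose permutes_imp_permutation[OF _ rot_permutes] permutation_swap_id)
  then show ?case using Suc by (simp add: sign_swap_id)
qed

lemma eps_par_rot:
  "eps_par d (Suc m) (rot (Suc m)) = (-1) ^ (if d 0 then length (filter d [1..<Suc m]) else 0)"
proof -
  have "{(i, j). i < j \<and> j < Suc m \<and> rot (Suc m) j < rot (Suc m) i \<and> d (rot (Suc m) i) \<and> d (rot (Suc m) j)}
    = (if d 0 then (\<lambda>i. (i, m)) ` {i. i < m \<and> d (Suc i)} else {})"
    by (auto simp: rot_def split: if_splits)
  moreover have "card {i. i < m \<and> d (Suc i)} = length (filter d [1..<Suc m])"
  proof -
    have "[1..<Suc m] = map Suc [0..<m]" by (simp add: map_Suc_upt)
    then have "length (filter d [1..<Suc m]) = length (filter (d \<circ> Suc) [0..<m])"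
      by (simp add: filter_map)
    then show ?thesis
      by (simp add: distinct_length_filter Int_def conj_commute)
  qed
  ultimately show ?thesis
    unfolding eps_par_def by (simp add: card_image inj_on_def)
qed

section \<open>Rotation invariance and the cyclic sums (a)\<close>

definition perm_word :: "nat \<Rightarrow> (nat \<Rightarrow> cmat) \<Rightarrow> (nat \<Rightarrow> nat) \<Rightarrow> nat \<Rightarrow> cmat" where
  "perm_word n X \<sigma> m = mlprod n (map (\<lambda>i. X (\<sigma> i)) [0..<m])"

lemma perm_word_Suc:
  assumes "\<tau> permutes {..<m}" and "in_gl p q (X m)"
  shows "perm_word (p + q) X \<tau> (Suc m) = mmul (p + q) (perm_word (p + q) X \<tau> m) (X m)"
  using permutes_not_in[OF assms(1)] mlprod_append_single[OF assms(2)] by (simp add: perm_word_def)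

lemma eps_par_str_perm_word_rot:
  assumes \<sigma>: "\<sigma> permutes {..<Suc m}"
    and X: "\<And>i. i < Suc m \<Longrightarrow> homog p q (d i) (X i)"
  shows "eps_par d (Suc m) (\<sigma> \<circ> rot (Suc m)) * str p q (perm_word (p + q) X (\<sigma> \<circ> rot (Suc m)) (Suc m))
       = eps_par d (Suc m) \<sigma> * str p q (perm_word (p + q) X \<sigma> (Suc m))"
proof -
  have \<sigma>_less: "\<sigma> i < Suc m" if "i < Suc m" for i using permutes_in_image[OF \<sigma>] that by auto
  define A where "A = X (\<sigma> 0)"
  define B where "B = mlprod (p + q) (map (\<lambda>i. X (\<sigma> i)) [1..<Suc m])"
  define N where "N = length (filter (d \<circ> \<sigma>) [1..<Suc m])"
  have A: "homog p q (d (\<sigma> 0)) A" unfolding A_def using X \<sigma>_less by simp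
  have B: "homog p q (odd N) B" unfolding B_def N_def
    using homog_mlprod[of "[1..<Suc m]" p q "d \<circ> \<sigma>" "X \<circ> \<sigma>"] X \<sigma>_less
    by (auto simp: o_def simp del: upt_Suc)
  have "[1..<Suc m] = map Suc [0..<m]"
    by (simp add: map_Suc_upt)
  then have "map (\<lambda>i. X (\<sigma> (rot (Suc m) i))) [0..<Suc m] = map (\<lambda>i. X (\<sigma> i)) [1..<Suc m] @ [A]"
    unfolding A_def by (simp add: rot_def cong: map_cong)
  then have "perm_word (p + q) X (\<sigma> \<circ> rot (Suc m)) (Suc m) = mmul (p + q) B A"
    unfolding perm_word_def B_def by (simp add: mlprod_append_single[OF homog_in_gl[OF A]])
  moreover have "perm_word (p + q) X \<sigma> (Suc m) = mmul (p + q) A B"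
    unfolding perm_word_def A_def B_def by (simp add: upt_conv_Cons mlprod_Cons del: upt_Suc)
  moreover have "eps_par d (Suc m) (\<sigma> \<circ> rot (Suc m)) = eps_par d (Suc m) \<sigma> * (if d (\<sigma> 0) \<and> odd N then -1 else 1)"
    unfolding eps_par_compose[OF \<sigma> rot_permutes] eps_par_rot N_def by simp
  ultimately show ?thesis
    using str_mmul_commute[OF A B] by simp
qed

lemma sign_eps_par_str_perm_word_rot:
  assumes \<sigma>: "\<sigma> permutes {..<Suc m}"
    and X: "\<And>i. i < Suc m \<Longrightarrow> homog p q (d i) (X i)"
  shows "of_int (sign (\<sigma> \<circ> rot (Suc m))) * eps_par d (Suc m) (\<sigma> \<circ> rot (Suc m))
           * str p q (perm_word (p + q) X (\<sigma> \<circ> rot (Suc m)) (Suc m))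
       = (-1) ^ m * (of_int (sign \<sigma>) * eps_par d (Suc m) \<sigma> * str p q (perm_word (p + q) X \<sigma> (Suc m)))"
proof -
  define E where "E = eps_par d (Suc m) \<sigma> * str p q (perm_word (p + q) X \<sigma> (Suc m))"
  have "sign (\<sigma> \<circ> rot (Suc m)) = sign \<sigma> * (-1) ^ m"
    using sign_compose[OF permutes_imp_permutation[OF _ \<sigma>] permutes_imp_permutation[OF _ rot_permutes]]
    by (simp add: sign_rot)
  then have "of_int (sign (\<sigma> \<circ> rot (Suc m))) * E = (-1) ^ m * (of_int (sign \<sigma>) * E)"
    by (simp add: mult_ac)
  then show ?thesis
    using eps_par_str_perm_word_rot[OF \<sigma> X] unfolding E_def by (simp only: mult.assoc)
qed

lemma permutes_fix_last: "{\<sigma>. \<sigma> permutes {..<Suc m} \<and> \<sigma> m = m} = {\<sigma>. \<sigma> permutes {..<m}}"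
proof (rule set_eqI, rule iffI)
  fix \<sigma> assume "\<sigma> \<in> {\<sigma>. \<sigma> permutes {..<Suc m} \<and> \<sigma> m = m}"
  then have \<sigma>: "\<sigma> permutes {..<Suc m}" and "\<sigma> m = m" by simp_all
  have "\<sigma> permutes {..<m}"
  proof (rule permutes_superset[OF \<sigma>])
    fix x assume "x \<in> {..<Suc m} - {..<m}"
    then show "\<sigma> x = x" using \<open>\<sigma> m = m\<close> by simp
  qed
  then show "\<sigma> \<in> {\<sigma>. \<sigma> permutes {..<m}}" by simp
next
  fix \<sigma> assume "\<sigma> \<in> {\<sigma>. \<sigma> permutes {..<m}}"
  then have \<sigma>: "\<sigma> permutes {..<m}" by simp
  have "\<sigma> permutes {..<Suc m}" by (rule permutes_subset[OF \<sigma>]) auto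
  moreover have "\<sigma> m = m" using permutes_not_in[OF \<sigma>] by simp
  ultimately show "\<sigma> \<in> {\<sigma>. \<sigma> permutes {..<Suc m} \<and> \<sigma> m = m}" by simp
qed

text \<open>Reindexing by \<open>\<sigma> \<mapsto> \<sigma> \<circ> rot^(i+1)\<close>, which carries position \<open>m\<close> to \<open>i\<close>, identifies
  the fibre \<open>{\<sigma>. \<sigma> i = m}\<close> with the fibre \<open>{\<sigma>. \<sigma> m = m}\<close>.\<close>

lemma sum_permutes_fibre_rot_invariant:
  fixes T :: "(nat \<Rightarrow> nat) \<Rightarrow> 'a::comm_monoid_add"
  assumes T: "\<And>\<sigma>. \<sigma> permutes {..<Suc m} \<Longrightarrow> T (\<sigma> \<circ> rot (Suc m)) = T \<sigma>" and "i < Suc m"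
  shows "(\<Sum>\<sigma>\<in>{\<sigma>. \<sigma> permutes {..<Suc m}}. if \<sigma> i = m then T \<sigma> else 0)
       = (\<Sum>\<sigma>\<in>{\<sigma>. \<sigma> permutes {..<m}}. T \<sigma>)"
proof -
  let ?S = "{\<sigma>. \<sigma> permutes {..<Suc m}}"
  let ?R = "rot (Suc m) ^^ Suc i"
  have T_funpow: "T (\<sigma> \<circ> (rot (Suc m) ^^ e)) = T \<sigma>" if "\<sigma> permutes {..<Suc m}" for \<sigma> e
    using that
  proof (induction e arbitrary: \<sigma>)
    case (Suc e)
    have "T (\<sigma> \<circ> (rot (Suc m) ^^ Suc e)) = T ((\<sigma> \<circ> rot (Suc m)) \<circ> (rot (Suc m) ^^ e))"
      by (simp only: funpow.simps(2) o_assoc)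
    also have "\<dots> = T (\<sigma> \<circ> rot (Suc m))"
      by (rule Suc.IH) (rule permutes_compose[OF rot_permutes Suc.prems])
    also have "\<dots> = T \<sigma>"
      by (rule T[OF Suc.prems])
    finally show ?case .
  qed simp
  have "(\<Sum>\<sigma>\<in>{\<sigma>. \<sigma> permutes {..<m}}. T \<sigma>) = (\<Sum>\<sigma>\<in>{\<sigma>\<in>?S. \<sigma> m = m}. T \<sigma>)"
    using permutes_fix_last[of m] by simp
  also have "\<dots> = (\<Sum>\<sigma>\<in>?S. if \<sigma> m = m then T \<sigma> else 0)"
    by (rule sum.inter_filter) (simp add: finite_permutations)
  also have "\<dots> = (\<Sum>\<sigma>\<in>?S. if (\<sigma> \<circ> ?R) m = m then T (\<sigma> \<circ> ?R) else 0)"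
    by (rule sum_permutations_compose_right[OF rot_funpow_permutes])
  also have "\<dots> = (\<Sum>\<sigma>\<in>?S. if \<sigma> i = m then T \<sigma> else 0)"
  proof (rule sum.cong[OF refl])
    fix \<sigma> assume "\<sigma> \<in> ?S"
    then have "(\<sigma> \<circ> ?R) m = \<sigma> i" "T (\<sigma> \<circ> ?R) = T \<sigma>"
      using rot_funpow_last[OF \<open>i < Suc m\<close>] T_funpow[of \<sigma> "Suc i"] by simp_all
    then show "(if (\<sigma> \<circ> ?R) m = m then T (\<sigma> \<circ> ?R) else 0) = (if \<sigma> i = m then T \<sigma> else 0)"
      by simp
  qed
  finally show ?thesis by (rule sym)
qed

lemma sum_permutes_rot_invariant:
  fixes T :: "(nat \<Rightarrow> nat) \<Rightarrow> 'a::semiring_1"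
  assumes T: "\<And>\<sigma>. \<sigma> permutes {..<Suc m} \<Longrightarrow> T (\<sigma> \<circ> rot (Suc m)) = T \<sigma>"
  shows "(\<Sum>\<sigma>\<in>{\<sigma>. \<sigma> permutes {..<Suc m}}. T \<sigma>) = of_nat (Suc m) * (\<Sum>\<sigma>\<in>{\<sigma>. \<sigma> permutes {..<m}}. T \<sigma>)"
proof -
  let ?S = "{\<sigma>. \<sigma> permutes {..<Suc m}}"
  have "T \<sigma> = (\<Sum>i<Suc m. if \<sigma> i = m then T \<sigma> else 0)" if "\<sigma> \<in> ?S" for \<sigma>
  proof -
    have \<sigma>: "\<sigma> permutes {..<Suc m}" using that by simp
    have "\<sigma> i = m \<longleftrightarrow> i = inv \<sigma> m" for i using permutes_inv_eq[OF \<sigma>] by metis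
    moreover have "inv \<sigma> m < Suc m" using permutes_in_image[OF permutes_inv[OF \<sigma>], of m] by simp
    ultimately show ?thesis by (simp add: sum.delta')
  qed
  then have "(\<Sum>\<sigma>\<in>?S. T \<sigma>) = (\<Sum>\<sigma>\<in>?S. \<Sum>i<Suc m. if \<sigma> i = m then T \<sigma> else 0)"
    by (rule sum.cong[OF refl])
  also have "\<dots> = (\<Sum>i<Suc m. \<Sum>\<sigma>\<in>?S. if \<sigma> i = m then T \<sigma> else 0)"
    by (rule sum.swap)
  also have "\<dots> = (\<Sum>i<Suc m. \<Sum>\<sigma>\<in>{\<sigma>. \<sigma> permutes {..<m}}. T \<sigma>)"
    by (rule sum.cong[OF refl], rule sum_permutes_fibre_rot_invariant[of m T, OF T]) simp_all
  finally show ?thesis by (simp del: sum.lessThan_Suc)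
qed

lemma Pm_Suc:
  assumes X: "\<And>i. i < Suc m \<Longrightarrow> homog p q (d i) (X i)"
  shows "Pm p q d X (Suc m) = of_nat (Suc m) * Bform p q (calP p q d X m) (X m)"
proof -
  let ?T = "\<lambda>\<sigma>. eps_par d (Suc m) \<sigma> * str p q (perm_word (p + q) X \<sigma> (Suc m))"
  have "Pm p q d X (Suc m) = (\<Sum>\<sigma>\<in>{\<sigma>. \<sigma> permutes {..<Suc m}}. ?T \<sigma>)"
    unfolding Pm_def calP_def str_msum perm_word_def ..
  also have "\<dots> = of_nat (Suc m) * (\<Sum>\<sigma>\<in>{\<sigma>. \<sigma> permutes {..<m}}. ?T \<sigma>)"
    by (rule sum_permutes_rot_invariant) (rule eps_par_str_perm_word_rot[OF _ X])
  also have "(\<Sum>\<sigma>\<in>{\<sigma>. \<sigma> permutes {..<m}}. ?T \<sigma>) = Bform p q (calP p q d X m) (X m)"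
    unfolding Bform_def calP_def mmul_msum_left str_msum perm_word_def[symmetric]
    using homog_in_gl[OF X[of m]] by (intro sum.cong) (simp_all add: eps_par_Suc perm_word_Suc)
  finally show ?thesis .
qed

lemma Lam_Suc:
  assumes X: "\<And>i. i < Suc m \<Longrightarrow> homog p q (d i) (X i)" and "even m"
  shows "Lam p q d X (Suc m) = of_nat (Suc m) * Bform p q (calA p q d X m) (X m)"
proof -
  let ?T = "\<lambda>\<sigma>. of_int (sign \<sigma>) * eps_par d (Suc m) \<sigma> * str p q (perm_word (p + q) X \<sigma> (Suc m))"
  have "Lam p q d X (Suc m) = (\<Sum>\<sigma>\<in>{\<sigma>. \<sigma> permutes {..<Suc m}}. ?T \<sigma>)"
    unfolding Lam_def calA_def str_msum perm_word_def ..
  also have "\<dots> = of_nat (Suc m) * (\<Sum>\<sigma>\<in>{\<sigma>. \<sigma> permutes {..<m}}. ?T \<sigma>)"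
    using sign_eps_par_str_perm_word_rot[OF _ X] \<open>even m\<close> by (intro sum_permutes_rot_invariant) simp
  also have "(\<Sum>\<sigma>\<in>{\<sigma>. \<sigma> permutes {..<m}}. ?T \<sigma>) = Bform p q (calA p q d X m) (X m)"
    unfolding Bform_def calA_def mmul_msum_left str_msum perm_word_def[symmetric]
    using homog_in_gl[OF X[of m]] by (intro sum.cong) (simp_all add: eps_par_Suc perm_word_Suc)
  finally show ?thesis .
qed

lemma Lam_Suc_eq_0:
  assumes X: "\<And>i. i < Suc m \<Longrightarrow> homog p q (d i) (X i)" and "odd m"
  shows "Lam p q d X (Suc m) = 0"
proof -
  let ?S = "{\<sigma>. \<sigma> permutes {..<Suc m}}"
  let ?T = "\<lambda>\<sigma>. of_int (sign \<sigma>) * eps_par d (Suc m) \<sigma> * str p q (perm_word (p + q) X \<sigma> (Suc m))"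
  have "Lam p q d X (Suc m) = (\<Sum>\<sigma>\<in>?S. ?T \<sigma>)"
    unfolding Lam_def calA_def str_msum perm_word_def ..
  also have "\<dots> = (\<Sum>\<sigma>\<in>?S. ?T (\<sigma> \<circ> rot (Suc m)))"
    by (rule sum_permutations_compose_right[OF rot_permutes])
  also have "\<dots> = (\<Sum>\<sigma>\<in>?S. - ?T \<sigma>)"
    using sign_eps_par_str_perm_word_rot[OF _ X] \<open>odd m\<close> by (intro sum.cong) simp_all
  also have "\<dots> = - (\<Sum>\<sigma>\<in>?S. ?T \<sigma>)"
    by (rule sum_negf)
  finally have "Lam p q d X (Suc m) = - Lam p q d X (Suc m)"
    unfolding Lam_def calA_def str_msum perm_word_def .
  then show ?thesis by simp
qed

section \<open>Expanding brackets: (b) and (c)\<close>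

text \<open>A pattern lists the factors of a word: \<open>Inl a\<close> stands for \<open>X (\<sigma> a)\<close> and \<open>Inr a\<close> for the
  bracket \<open>[X (\<sigma> a), X (\<sigma> (a+1))]\<close>.\<close>

fun pattern_factor :: "nat \<Rightarrow> (nat \<Rightarrow> bool) \<Rightarrow> (nat \<Rightarrow> cmat) \<Rightarrow> (nat \<Rightarrow> nat) \<Rightarrow> nat + nat \<Rightarrow> cmat" where
  "pattern_factor n d X \<sigma> (Inl a) = X (\<sigma> a)"
| "pattern_factor n d X \<sigma> (Inr a) = brk n d X \<sigma> a"

fun pattern_positions :: "(nat + nat) list \<Rightarrow> nat list" where
  "pattern_positions [] = []"
| "pattern_positions (Inl a # bs) = a # pattern_positions bs"
| "pattern_positions (Inr a # bs) = a # Suc a # pattern_positions bs"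

fun unbracket :: "(nat + nat) list \<Rightarrow> (nat + nat) list" where
  "unbracket [] = []"
| "unbracket (Inl a # bs) = Inl a # unbracket bs"
| "unbracket (Inr a # bs) = Inl a # Inl (Suc a) # unbracket bs"

fun bracket_count :: "(nat + nat) list \<Rightarrow> nat" where
  "bracket_count [] = 0"
| "bracket_count (Inl a # bs) = bracket_count bs"
| "bracket_count (Inr a # bs) = Suc (bracket_count bs)"

definition bracket_run :: "nat \<Rightarrow> nat \<Rightarrow> (nat + nat) list" where
  "bracket_run b n = map (\<lambda>i. Inr (b + 2 * i)) [0..<n]"

definition pattern_sum :: "nat \<Rightarrow> nat \<Rightarrow> (nat \<Rightarrow> bool) \<Rightarrow> (nat \<Rightarrow> cmat) \<Rightarrow> nat \<Rightarrow> (nat + nat) list \<Rightarrow> cmat" where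
  "pattern_sum p q d X m bs = msum {\<sigma>. \<sigma> permutes {..<m}}
     (\<lambda>\<sigma>. msmul (of_int (sign \<sigma>) * eps_par d m \<sigma>) (mlprod (p + q) (map (pattern_factor (p + q) d X \<sigma>) bs)))"

lemma pattern_positions_append [simp]:
  "pattern_positions (bs @ cs) = pattern_positions bs @ pattern_positions cs"
  by (induction bs rule: pattern_positions.induct) auto

lemma unbracket_append [simp]: "unbracket (bs @ cs) = unbracket bs @ unbracket cs"
  by (induction bs rule: unbracket.induct) auto

lemma bracket_count_append [simp]: "bracket_count (bs @ cs) = bracket_count bs + bracket_count cs"
  by (induction bs rule: bracket_count.induct) auto

lemma pattern_positions_unbracket [simp]: "pattern_positions (unbracket bs) = pattern_positions bs"
  by (induction bs rule: unbracket.induct) auto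

lemma pattern_positions_map_Inl [simp]: "pattern_positions (map Inl xs) = xs"
  by (induction xs) auto

lemma unbracket_bracket_run: "unbracket (bracket_run b n) = map Inl [b..<b + 2 * n]"
  by (induction n) (auto simp: bracket_run_def numeral_2_eq_2)

lemma bracket_count_bracket_run: "bracket_count (bracket_run b n) = n"
  by (induction n) (auto simp: bracket_run_def)

lemma pattern_factor_transpose:
  "a \<notin> set (pattern_positions bs) \<Longrightarrow> Suc a \<notin> set (pattern_positions bs) \<Longrightarrow>
   map (pattern_factor n d X (\<sigma> \<circ> transpose a (Suc a))) bs = map (pattern_factor n d X \<sigma>) bs"
  by (induction bs rule: pattern_positions.induct) (auto simp: brk_def transpose_def)

lemma pattern_sum_Inr:
  assumes distinct: "distinct (pattern_positions (bs @ Inr a # cs))"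
    and range: "set (pattern_positions (bs @ Inr a # cs)) \<subseteq> {..<m}"
  shows "pattern_sum p q d X m (bs @ Inr a # cs) = msmul 2 (pattern_sum p q d X m (bs @ Inl a # Inl (Suc a) # cs))"
proof -
  let ?n = "p + q"
  let ?S = "{\<sigma>. \<sigma> permutes {..<m}}"
  let ?t = "transpose a (Suc a)"
  have "Suc a < m" using range by auto
  then have t: "?t permutes {..<m}" by (intro permutes_swap_id) auto
  define c where "c = (\<lambda>\<sigma>. of_int (sign \<sigma>) * eps_par d m \<sigma> :: complex)"
  define s where "s = (\<lambda>\<sigma>::nat\<Rightarrow>nat. if d (\<sigma> a) \<and> d (\<sigma> (Suc a)) then -1 else (1::complex))"
  define W where "W = (\<lambda>\<sigma>. mlprod ?n (map (pattern_factor ?n d X \<sigma>) (bs @ Inl a # Inl (Suc a) # cs)))"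
  have c_t: "c (\<sigma> \<circ> ?t) = - s \<sigma> * c \<sigma>" if "\<sigma> \<in> ?S" for \<sigma>
  proof -
    have \<sigma>: "\<sigma> permutes {..<m}" using that by simp
    have "sign (\<sigma> \<circ> ?t) = - sign \<sigma>"
      using sign_compose[OF permutes_imp_permutation[OF _ \<sigma>] permutes_imp_permutation[OF _ t]]
      by (simp add: sign_swap_id)
    moreover have "eps_par d m (\<sigma> \<circ> ?t) = eps_par d m \<sigma> * s \<sigma>"
      unfolding eps_par_compose[OF \<sigma> t] eps_par_transpose[OF \<open>Suc a < m\<close>] s_def by simp
    ultimately show ?thesis unfolding c_def by simp
  qed
  have W_bracket: "mlprod ?n (map (pattern_factor ?n d X \<sigma>) (bs @ Inr a # cs)) = msub (W \<sigma>) (msmul (s \<sigma>) (W (\<sigma> \<circ> ?t)))" for \<sigma>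
    using distinct
    by (simp add: W_def s_def brk_def mlprod_sbr pattern_factor_transpose)
  have "pattern_sum p q d X m (bs @ Inr a # cs) i j =
        msmul 2 (pattern_sum p q d X m (bs @ Inl a # Inl (Suc a) # cs)) i j" for i j
  proof -
    have "pattern_sum p q d X m (bs @ Inr a # cs) i j = (\<Sum>\<sigma>\<in>?S. c \<sigma> * (W \<sigma> i j - s \<sigma> * W (\<sigma> \<circ> ?t) i j))"
      unfolding pattern_sum_def msum_def msmul_def c_def W_bracket by (simp add: msub_def msmul_def)
    also have "\<dots> = (\<Sum>\<sigma>\<in>?S. c \<sigma> * W \<sigma> i j + c (\<sigma> \<circ> ?t) * W (\<sigma> \<circ> ?t) i j)"
      by (intro sum.cong) (simp_all add: c_t algebra_simps)
    also have "\<dots> = (\<Sum>\<sigma>\<in>?S. c \<sigma> * W \<sigma> i j) + (\<Sum>\<sigma>\<in>?S. c (\<sigma> \<circ> ?t) * W (\<sigma> \<circ> ?t) i j)"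
      by (rule sum.distrib)
    also have "(\<Sum>\<sigma>\<in>?S. c (\<sigma> \<circ> ?t) * W (\<sigma> \<circ> ?t) i j) = (\<Sum>\<sigma>\<in>?S. c \<sigma> * W \<sigma> i j)"
      by (rule sum_permutations_compose_right[OF t, symmetric])
    also have "(\<Sum>\<sigma>\<in>?S. c \<sigma> * W \<sigma> i j) + (\<Sum>\<sigma>\<in>?S. c \<sigma> * W \<sigma> i j) =
        msmul 2 (pattern_sum p q d X m (bs @ Inl a # Inl (Suc a) # cs)) i j"
      unfolding pattern_sum_def msum_def msmul_def c_def W_def by (simp add: sum_distrib_left)
    finally show ?thesis .
  qed
  then show ?thesis by (simp add: fun_eq_iff)
qed

lemma pattern_sum_unbracket:
  "distinct (pattern_positions (bs @ cs)) \<Longrightarrow> set (pattern_positions (bs @ cs)) \<subseteq> {..<m} \<Longrightarrow>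
   pattern_sum p q d X m (bs @ cs) = msmul (2 ^ bracket_count cs) (pattern_sum p q d X m (bs @ unbracket cs))"
proof (induction cs arbitrary: bs rule: bracket_count.induct)
  case 1
  then show ?case by (simp add: msmul_def)
next
  case (2 a cs)
  then show ?case using "2.IH"[of "bs @ [Inl a]"] by simp
next
  case (3 a cs)
  then have "pattern_sum p q d X m (bs @ Inr a # cs) =
      msmul 2 (pattern_sum p q d X m ((bs @ [Inl a, Inl (Suc a)]) @ cs))"
    by (simp add: pattern_sum_Inr)
  then show ?case using "3" "3.IH"[of "bs @ [Inl a, Inl (Suc a)]"] by (simp add: msmul_msmul)
qed

lemma pattern_sum_eq_calA:
  assumes "unbracket bs = map Inl [0..<m]"
  shows "pattern_sum p q d X m bs = msmul (2 ^ bracket_count bs) (calA p q d X m)"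
proof -
  have "pattern_positions bs = [0..<m]"
    using pattern_positions_unbracket[of bs] assms by simp
  then have "pattern_sum p q d X m ([] @ bs) = msmul (2 ^ bracket_count bs) (pattern_sum p q d X m ([] @ map Inl [0..<m]))"
    using pattern_sum_unbracket[of "[]" bs m] assms by (simp add: subset_eq)
  then show ?thesis by (simp add: pattern_sum_def calA_def o_def)
qed

lemma lhsB_eq: "lhsB p q d X k = msmul (2 ^ k) (calA p q d X (2 * k))"
proof -
  have "unbracket (bracket_run 0 k) = map Inl [0..<2 * k]"
    using unbracket_bracket_run[of 0 k] by simp
  moreover have "lhsB p q d X k = pattern_sum p q d X (2 * k) (bracket_run 0 k)"
    unfolding lhsB_def pattern_sum_def bracket_run_def by (simp add: o_def)
  ultimately show ?thesis
    by (simp only: pattern_sum_eq_calA bracket_count_bracket_run)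
qed

lemma lhsC_eq: "lhsC p q d X (j + r) j = msmul (2 ^ (j + r)) (calA p q d X (2 * (j + r) + 1))"
proof -
  define bs where "bs = bracket_run 0 j @ Inl (2 * j) # bracket_run (2 * j + 1) r"
  have "2 * (j + r) + 1 = (2 * j + 1) + 2 * r" by simp
  then have "[0..<2 * (j + r) + 1] = [0..<2 * j + 1] @ [2 * j + 1..<(2 * j + 1) + 2 * r]"
    by (simp only:) (rule upt_add_eq_append, simp)
  then have "unbracket bs = map Inl [0..<2 * (j + r) + 1]"
    unfolding bs_def by (simp add: unbracket_bracket_run)
  moreover have "bracket_count bs = j + r"
    unfolding bs_def by (simp add: bracket_count_bracket_run)
  moreover have "lhsC p q d X (j + r) j = pattern_sum p q d X (2 * (j + r) + 1) bs"
    unfolding lhsC_def pattern_sum_def bs_def bracket_run_def by (simp add: o_def)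
  ultimately show ?thesis
    by (simp only: pattern_sum_eq_calA)
qed

theorem proposition4p1:
  fixes p q k :: nat and d :: "nat \<Rightarrow> bool" and X :: "nat \<Rightarrow> cmat"
  assumes "1 \<le> k"
    and "\<And>i. i < 2*k+1 \<Longrightarrow> homog p q (d i) (X i)"
  shows "Pm p q d X (2*k+1) = of_nat (2*k+1) * Bform p q (calP p q d X (2*k)) (X (2*k))
       \<and> Lam p q d X (2*k) = 0
       \<and> Lam p q d X (2*k+1) = of_nat (2*k+1) * Bform p q (calA p q d X (2*k)) (X (2*k))
       \<and> lhsB p q d X k = msmul (2^k) (calA p q d X (2*k))
       \<and> (\<forall>j\<le>k. lhsC p q d X k j = msmul (2^k) (calA p q d X (2*k+1)))"
proof (intro conjI allI impI)
  have X: "\<And>i. i < Suc (2 * k) \<Longrightarrow> homog p q (d i) (X i)"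
    using assms(2) by simp
  show "Pm p q d X (2*k+1) = of_nat (2*k+1) * Bform p q (calP p q d X (2*k)) (X (2*k))"
    using Pm_Suc[OF X] by simp
  show "Lam p q d X (2*k+1) = of_nat (2*k+1) * Bform p q (calA p q d X (2*k)) (X (2*k))"
    using Lam_Suc[OF X] by simp
  have "Suc (2 * k - 1) = 2 * k" "odd (2 * k - 1)"
    using \<open>1 \<le> k\<close> by simp_all
  then show "Lam p q d X (2*k) = 0"
    using Lam_Suc_eq_0[of "2 * k - 1" p q d X] X by simp
  show "lhsB p q d X k = msmul (2^k) (calA p q d X (2*k))"
    by (rule lhsB_eq)
  fix j assume "j \<le> k"
  then obtain r where "k = j + r" using le_Suc_ex by blast
  then show "lhsC p q d X k j = msmul (2^k) (calA p q d X (2*k+1))"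
    using lhsC_eq[of p q d X j r] by simp
qed

end
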